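(* Let $g(z)=z^3-z^2+7z+1$, $A=\{z\in\mathbb{C}:\Re z\le0,\ |g(z)|=1\}$ and $B=\{z\in\mathbb{C}:\Re z>0,\ |g(z)|=1\}$. Then $A\subset D(0,0.275)$ and $B\subset D(0,2.75)$, where $D(0,r)$ is the open disc of radius $r$ centered at $0$. *)

theory Defs
  imports "HOL-Analysis.Analysis"
begin

end

theory Submission
  imports Defs
begin

text \<open>With \<open>x = Re z\<close> and \<open>p = |z|\<^sup>2\<close>, \<open>|g z|\<^sup>2 - 1\<close> is \<open>level_poly x p\<close>, so it
  suffices to show that this is positive whenever \<open>x \<le> 0 \<le> p - x\<^sup>2\<close>, \<open>p \<ge> 0.275\<^sup>2\<close>, and whenever
  \<open>x \<ge> 0\<close>, \<open>p \<ge> 2.75\<^sup>2\<close>. The first bound is nearly sharp: on the negative real axis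
  \<open>g (-u) = -1 - h u\<close> with \<open>h u = u\<^sup>3 + u\<^sup>2 + 7u - 2\<close>, whose root lies just below \<open>0.275\<close>.
  Writing \<open>p = u\<^sup>2 + t\<close>, the terms that could be negative are controlled by a case split on
  \<open>u\<close> and \<open>t\<close>. For the second bound, \<open>level_poly x p\<close> minus the cubic
  \<open>8 (x - 3/5)\<^sup>2 (x + 6/5) \<ge> 0\<close> is a quadratic in \<open>x\<close> with negative discriminant.\<close>

definition level_poly :: "real \<Rightarrow> real \<Rightarrow> real" where
  "level_poly x p = p^3 - 13*p^2 + 51*p - x*(2*p^2 + 20*p - 14) + x^2*(28*p - 4) + 8*x^3"

lemma cmod_cubic_squared:
  fixes z :: complex
  shows "(cmod (z^3 - z^2 + 7*z + 1))^2 = 1 + level_poly (Re z) ((cmod z)^2)"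
proof -
  define x y where "x = Re z" and "y = Im z"
  have re: "Re (z^3 - z^2 + 7*z + 1) = x^3 - 3*x*y^2 - x^2 + y^2 + 7*x + 1"
    unfolding x_def y_def by (simp add: power3_eq_cube power2_eq_square algebra_simps)
  have im: "Im (z^3 - z^2 + 7*z + 1) = 3*x^2*y - y^3 - 2*x*y + 7*y"
    unfolding x_def y_def by (simp add: power3_eq_cube power2_eq_square algebra_simps)
  have "(cmod (z^3 - z^2 + 7*z + 1))^2
      = (x^3 - 3*x*y^2 - x^2 + y^2 + 7*x + 1)^2 + (3*x^2*y - y^3 - 2*x*y + 7*y)^2"
    unfolding cmod_power2 re im ..
  also have "\<dots> = 1 + level_poly x (x^2 + y^2)"
    unfolding level_poly_def by algebra
  finally show ?thesis
    by (simp add: x_def y_def cmod_power2)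
qed

lemma quadratic_pos_of_discrim_neg:
  fixes a b c x :: real
  assumes "a > 0" and "b^2 < 4*a*c"
  shows "a*x^2 + b*x + c > 0"
proof -
  have "4*a*(a*x^2 + b*x + c) = (2*a*x + b)^2 + (4*a*c - b^2)"
    by algebra
  also have "\<dots> > 0"
    using assms(2) by (simp add: add_nonneg_pos)
  finally show ?thesis
    using assms(1) by (simp add: zero_less_mult_iff)
qed

lemma level_poly_neg_ge:
  fixes u t :: real
  assumes "u \<ge> 0" and "t \<ge> 0"
  shows "level_poly (-u) (u^2 + t) \<ge> u*(7 + u + u^2)*(u^3 + u^2 + 7*u - 2) + t*(t^2 - 13*t + 51)"
proof -
  have "level_poly (-u) (u^2 + t) - (u*(7 + u + u^2)*(u^3 + u^2 + 7*u - 2) + t*(t^2 - 13*t + 51))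
      = t*(3*u^4 + 4*u^3 + 2*u^2 + 20*u) + t^2*(3*u^2 + 2*u)"
    unfolding level_poly_def by algebra
  also have "\<dots> \<ge> 0"
    using assms by simp
  finally show ?thesis
    by simp
qed

lemma square_sub_13_add_51_ge:
  fixes t :: real
  shows "t^2 - 13*t + 51 \<ge> 35/4"
proof -
  have "t^2 - 13*t + 51 = (t - 13/2)^2 + 35/4"
    by algebra
  then show ?thesis
    by simp
qed

lemma cubic_pos_of_ge_11_40:
  fixes u :: real
  assumes "u \<ge> 11/40"
  shows "u^3 + u^2 + 7*u - 2 > 0"
proof -
  have "u^3 + u^2 + 7*u - 2 - 1371/64000 = (u - 11/40)*(u^2 + u*(11/40) + 121/1600 + u + 11/40 + 7)"
    by algebra
  moreover have "(u - 11/40)*(u^2 + u*(11/40) + 121/1600 + u + 11/40 + 7) \<ge> 0"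
    using assms by simp
  ultimately show ?thesis
    by linarith
qed

text \<open>The slope is \<open>h' (11/40)\<close>: \<open>h\<close> is convex on \<open>u \<ge> 0\<close>, and \<open>h (11/40) > 0\<close> is dropped.\<close>

lemma cubic_ge_tangent_11_40:
  fixes u :: real
  assumes "u \<ge> 0"
  shows "u^3 + u^2 + 7*u - 2 \<ge> 12443/1600*(u - 11/40)"
proof -
  have "u^3 + u^2 + 7*u - 2 - 1371/64000 - 12443/1600*(u - 11/40) = (u - 11/40)^2*(u + 2*(11/40) + 1)"
    by algebra
  moreover have "(u - 11/40)^2*(u + 2*(11/40) + 1) \<ge> 0"
    using assms by simp
  ultimately show ?thesis
    by linarith
qed

lemma level_poly_neg_lower_bound_pos:
  fixes u t :: real
  assumes u: "u \<ge> 0" and t: "t \<ge> 0" and ut: "u^2 + t \<ge> 121/1600"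
  shows "u*(7 + u + u^2)*(u^3 + u^2 + 7*u - 2) + t*(t^2 - 13*t + 51) > 0"
proof -
  define M h where "M = u*(7 + u + u^2)" and "h = u^3 + u^2 + 7*u - 2"
  define K :: real where "K = 7 + 11/40 + 121/1600"
  have M_nonneg: "M \<ge> 0"
    using u by (simp add: M_def)
  have M_le: "M \<le> K*u" if "u < 11/40"
  proof -
    have "u^2 \<le> (11/40)^2"
      using u that by (intro power_mono) auto
    then have "7 + u + u^2 \<le> K"
      using that by (simp add: K_def power_divide)
    then show ?thesis
      unfolding M_def using u by (metis mult.commute mult_right_mono)
  qed
  consider "u \<ge> 11/40" | "u < 11/40" "t \<ge> 1/2" | "u < 11/40" "t < 1/2"
    by linarith
  then have "M*h + t*(t^2 - 13*t + 51) > 0"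
  proof cases
    case 1
    then have "M*h > 0"
      using cubic_pos_of_ge_11_40 u by (simp add: M_def h_def add_pos_nonneg)
    moreover have "t*(t^2 - 13*t + 51) \<ge> 0"
      using t square_sub_13_add_51_ge[of t] by simp
    ultimately show ?thesis
      by linarith
  next
    case 2
    have "M \<le> K*(11/40)"
      using M_le[OF 2(1)] 2 by (simp add: K_def)
    moreover have "M*h \<ge> M*(-2)"
      using M_nonneg u by (intro mult_left_mono) (auto simp: h_def)
    moreover have "t*(t^2 - 13*t + 51) \<ge> (1/2)*(35/4)"
      using 2 square_sub_13_add_51_ge[of t] by (intro mult_mono) auto
    ultimately show ?thesis
      by (simp add: K_def power2_eq_square)
  next
    case 3
    have "t^2 - 13*t + 51 \<ge> 89/2"
      using 3 t zero_le_power2[of t] by linarith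
    then have t_term: "t*(t^2 - 13*t + 51) \<ge> 89/2*((11/40 - u)*(11/40 + u))"
      using ut t mult_left_mono[of "89/2" "t^2 - 13*t + 51" t]
      by (simp add: algebra_simps power2_eq_square)
    have "M*(11/40 - u) \<le> K*u*(11/40 - u)"
      using M_le[OF 3(1)] 3 by (intro mult_right_mono) auto
    moreover have "M*h \<ge> M*(12443/1600*(u - 11/40))"
      unfolding h_def by (rule mult_left_mono[OF cubic_ge_tangent_11_40[OF u] M_nonneg])
    moreover have "M*(12443/1600*(u - 11/40)) = - (12443/1600)*(M*(11/40 - u))"
      by algebra
    ultimately have Mh: "M*h \<ge> - (12443/1600)*(K*u*(11/40 - u))"
      by linarith
    have "12443/1600*(K*u) < 89/2*(11/40 + u)"
      using u 3 by (simp add: K_def power2_eq_square)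
    then have "12443/1600*(K*u)*(11/40 - u) < 89/2*(11/40 + u)*(11/40 - u)"
      using 3 by (intro mult_strict_right_mono) auto
    moreover have "12443/1600*(K*u)*(11/40 - u) = 12443/1600*(K*u*(11/40 - u))"
      and "89/2*(11/40 + u)*(11/40 - u) = 89/2*((11/40 - u)*(11/40 + u))"
      by algebra+
    ultimately show ?thesis
      using Mh t_term by linarith
  qed
  then show ?thesis
    by (simp add: M_def h_def)
qed

lemma level_poly_pos_left:
  fixes x p :: real
  assumes "x \<le> 0" and "x^2 \<le> p" and "p \<ge> 121/1600"
  shows "level_poly x p > 0"
proof -
  have "level_poly (-(-x)) ((-x)^2 + (p - x^2)) > 0"
    using level_poly_neg_ge[of "-x" "p - x^2"] level_poly_neg_lower_bound_pos[of "-x" "p - x^2"] assms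
    by simp
  then show ?thesis
    by simp
qed

lemma level_poly_pos_right:
  fixes x p :: real
  assumes x: "x \<ge> 0" and p: "p \<ge> 121/16"
  shows "level_poly x p > 0"
proof -
  define a b c where "a = 28*p - 4"
    and "b = -(2*p^2 + 20*p - 14 - 216/25)"
    and "c = p^3 - 13*p^2 + 51*p - 432/125"
  define w where "w = p - 121/16"
  have "w \<ge> 0"
    using p by (simp add: w_def)
  then have "1699081931/10240000 + 163948311/32000*w + 5967673/800*w^2 + 1715*w^3 + 108*w^4 > 0"
    by (simp add: add_pos_nonneg)
  also have "1699081931/10240000 + 163948311/32000*w + 5967673/800*w^2 + 1715*w^3 + 108*w^4
      = 4*a*c - b^2"
    unfolding a_def b_def c_def w_def by algebra
  finally have quadratic: "a*x^2 + b*x + c > 0"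
    using p by (intro quadratic_pos_of_discrim_neg) (auto simp: a_def)
  have "(x - 3/5)^2*(x + 6/5) \<ge> 0"
    using x by simp
  moreover have "level_poly x p = (a*x^2 + b*x + c) + 8*(x - 3/5)^2*(x + 6/5)"
    unfolding level_poly_def a_def b_def c_def by algebra
  ultimately show ?thesis
    using quadratic by linarith
qed

theorem proposition3p7:
  fixes g :: "complex \<Rightarrow> complex" and A B :: "complex set"
  assumes "\<And>z. g z = z^3 - z^2 + 7*z + 1"
    and "A = {z. Re z \<le> 0 \<and> cmod (g z) = 1}"
    and "B = {z. Re z > 0 \<and> cmod (g z) = 1}"
  shows "A \<subseteq> ball 0 0.275 \<and> B \<subseteq> ball 0 2.75"
proof -
  have level: "level_poly (Re z) ((cmod z)^2) = 0" if "cmod (g z) = 1" for z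
    using cmod_cubic_squared[of z] that assms(1) by simp
  have "cmod z < 11/40" if "Re z \<le> 0" "cmod (g z) = 1" for z
  proof (rule ccontr)
    assume "\<not> cmod z < 11/40"
    then have "(11/40)^2 \<le> (cmod z)^2"
      by (intro power_mono) auto
    then have "(cmod z)^2 \<ge> 121/1600"
      by (simp add: power_divide)
    moreover have "(Re z)^2 \<le> (cmod z)^2"
      using abs_Re_le_cmod[of z] by (metis abs_ge_zero power2_abs power_mono)
    ultimately show False
      using level_poly_pos_left[of "Re z" "(cmod z)^2"] level[OF that(2)] that(1) by simp
  qed
  moreover have "cmod z < 11/4" if "Re z > 0" "cmod (g z) = 1" for z
  proof (rule ccontr)
    assume "\<not> cmod z < 11/4"
    then have "(11/4)^2 \<le> (cmod z)^2"
      by (intro power_mono) auto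
    then have "(cmod z)^2 \<ge> 121/16"
      by (simp add: power_divide)
    then show False
      using level_poly_pos_right[of "Re z" "(cmod z)^2"] level[OF that(2)] that(1) by simp
  qed
  ultimately show ?thesis
    using assms(2,3) by auto
qed

end
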